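(* Let $S$ be a pomonoid and $B$ an $S$-poset. Every regular injective object $f:X\to B$ of $\mathbf{Pos}\text{-}S/B$ is a topological functor when $X$ and $B$ are regarded as categories (posets) and $f$ as a functor.
   Context: $\mathbf{Pos}\text{-}S$ is the category of right $S$-posets over a pomonoid $S$ with action-preserving monotone maps; $\mathbf{Pos}\text{-}S/B$ is its slice over $B$. Regular injective means injective with respect to order-embeddings (the regular monomorphisms). A poset is viewed as a category with a unique arrow $a\to a'$ iff $a\le a'$; monotone maps are functors. For a functor $G:\mathcal A\to\mathcal X$, a source $(f_i:A\to A_i)_{i\in I}$ in $\mathcal A$ is $G$-initial if for every source $(g_i:C\to A_i)_{i\in I}$ in $\mathcal A$ and every $\mathcal X$-morphism $h:GC\to GA$ with $Gg_i=Gf_i\circ h$ for all $i$, there is a unique $\bar h:C\to A$ with $G\bar h=h$ and $g_i=f_i\bar h$ for all $i$. A source $(f_i:A\to A_i)$ lifts a $G$-structured source $(x_i:X\to GA_i)$ if $GA=X$ and $Gf_i=x_i$ for all $i$. $G$ is topological if every $G$-structured source $(X\to GA_i)_{i\in I}$ has a unique $G$-initial lift. *)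

theory Defs
  imports Main
begin

definition poset_on :: "'a set \<Rightarrow> ('a \<Rightarrow> 'a \<Rightarrow> bool) \<Rightarrow> bool" where
  "poset_on A le \<longleftrightarrow>
     (\<forall>a\<in>A. le a a) \<and>
     (\<forall>a\<in>A. \<forall>b\<in>A. le a b \<and> le b a \<longrightarrow> a = b) \<and>
     (\<forall>a\<in>A. \<forall>b\<in>A. \<forall>c\<in>A. le a b \<and> le b c \<longrightarrow> le a c)"

record 's pomon =
  pm_car :: "'s set"
  pm_le :: "'s \<Rightarrow> 's \<Rightarrow> bool"
  pm_mult :: "'s \<Rightarrow> 's \<Rightarrow> 's"
  pm_one :: 's

definition pomonoid :: "'s pomon \<Rightarrow> bool" where
  "pomonoid S \<longleftrightarrow>
     poset_on (pm_car S) (pm_le S) \<and>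
     pm_one S \<in> pm_car S \<and>
     (\<forall>s\<in>pm_car S. \<forall>t\<in>pm_car S. pm_mult S s t \<in> pm_car S) \<and>
     (\<forall>s\<in>pm_car S. \<forall>t\<in>pm_car S. \<forall>u\<in>pm_car S.
        pm_mult S (pm_mult S s t) u = pm_mult S s (pm_mult S t u)) \<and>
     (\<forall>s\<in>pm_car S. pm_mult S (pm_one S) s = s \<and> pm_mult S s (pm_one S) = s) \<and>
     (\<forall>s\<in>pm_car S. \<forall>s'\<in>pm_car S. \<forall>t\<in>pm_car S. \<forall>t'\<in>pm_car S.
        pm_le S s s' \<and> pm_le S t t' \<longrightarrow> pm_le S (pm_mult S s t) (pm_mult S s' t'))"

record ('a, 's) sposet =
  sp_car :: "'a set"
  sp_le :: "'a \<Rightarrow> 'a \<Rightarrow> bool"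
  sp_act :: "'a \<Rightarrow> 's \<Rightarrow> 'a"

definition is_Sposet :: "'s pomon \<Rightarrow> ('a, 's) sposet \<Rightarrow> bool" where
  "is_Sposet S A \<longleftrightarrow>
     poset_on (sp_car A) (sp_le A) \<and>
     (\<forall>a\<in>sp_car A. \<forall>s\<in>pm_car S. sp_act A a s \<in> sp_car A) \<and>
     (\<forall>a\<in>sp_car A. sp_act A a (pm_one S) = a) \<and>
     (\<forall>a\<in>sp_car A. \<forall>s\<in>pm_car S. \<forall>t\<in>pm_car S.
        sp_act A (sp_act A a s) t = sp_act A a (pm_mult S s t)) \<and>
     (\<forall>a\<in>sp_car A. \<forall>a'\<in>sp_car A. \<forall>s\<in>pm_car S. \<forall>s'\<in>pm_car S.
        sp_le A a a' \<and> pm_le S s s' \<longrightarrow> sp_le A (sp_act A a s) (sp_act A a' s'))"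

definition Spos_hom :: "'s pomon \<Rightarrow> ('a, 's) sposet \<Rightarrow> ('b, 's) sposet \<Rightarrow> ('a \<Rightarrow> 'b) \<Rightarrow> bool" where
  "Spos_hom S A A' h \<longleftrightarrow>
     (\<forall>a\<in>sp_car A. h a \<in> sp_car A') \<and>
     (\<forall>a\<in>sp_car A. \<forall>b\<in>sp_car A. sp_le A a b \<longrightarrow> sp_le A' (h a) (h b)) \<and>
     (\<forall>a\<in>sp_car A. \<forall>s\<in>pm_car S. h (sp_act A a s) = sp_act A' (h a) s)"

definition slice_obj :: "'s pomon \<Rightarrow> ('b, 's) sposet \<Rightarrow> ('x, 's) sposet \<Rightarrow> ('x \<Rightarrow> 'b) \<Rightarrow> bool" where
  "slice_obj S B X f \<longleftrightarrow> pomonoid S \<and> is_Sposet S B \<and> is_Sposet S X \<and> Spos_hom S X B f"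

definition slice_hom :: "'s pomon \<Rightarrow> ('b, 's) sposet \<Rightarrow> ('x, 's) sposet \<Rightarrow> ('x \<Rightarrow> 'b)
    \<Rightarrow> ('y, 's) sposet \<Rightarrow> ('y \<Rightarrow> 'b) \<Rightarrow> ('x \<Rightarrow> 'y) \<Rightarrow> bool" where
  "slice_hom S B X f Y g h \<longleftrightarrow> Spos_hom S X Y h \<and> (\<forall>x\<in>sp_car X. g (h x) = f x)"

definition order_embedding :: "('x, 's) sposet \<Rightarrow> ('y, 's) sposet \<Rightarrow> ('x \<Rightarrow> 'y) \<Rightarrow> bool" where
  "order_embedding X Y h \<longleftrightarrow>
     (\<forall>x\<in>sp_car X. \<forall>x'\<in>sp_car X. sp_le Y (h x) (h x') \<longleftrightarrow> sp_le X x x')"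

text \<open>The test objects Y, Z range over S-posets whose
  carriers live in the type 'z.\<close>
definition regular_injective :: "'z itself \<Rightarrow> 's pomon \<Rightarrow> ('b, 's) sposet \<Rightarrow> ('x, 's) sposet
    \<Rightarrow> ('x \<Rightarrow> 'b) \<Rightarrow> bool" where
  "regular_injective ty S B X f \<longleftrightarrow>
     slice_obj S B X f \<and>
     (\<forall>(Y :: ('z, 's) sposet) g (Z :: ('z, 's) sposet) k m u.
        slice_obj S B Y g \<and> slice_obj S B Z k \<and>
        slice_hom S B Y g Z k m \<and> order_embedding Y Z m \<and>
        slice_hom S B Y g X f u \<longrightarrow>
        (\<exists>v. slice_hom S B Z k X f v \<and> (\<forall>y\<in>sp_car Y. v (m y) = u y)))"

text \<open>The source (A <= a i)_{i in I} in the poset X is G-initial for the monotone map G = f: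
  for every source (c <= a i)_{i in I} and every arrow f c <= f A in B there is a (necessarily
  unique, and automatically commuting) arrow c <= A.\<close>
definition initial_source :: "'x set \<Rightarrow> ('x \<Rightarrow> 'x \<Rightarrow> bool) \<Rightarrow> ('b \<Rightarrow> 'b \<Rightarrow> bool)
    \<Rightarrow> ('x \<Rightarrow> 'b) \<Rightarrow> 'x \<Rightarrow> 'i set \<Rightarrow> ('i \<Rightarrow> 'x) \<Rightarrow> bool" where
  "initial_source X leX leB f A I a \<longleftrightarrow>
     A \<in> X \<and> (\<forall>i\<in>I. a i \<in> X \<and> leX A (a i)) \<and>
     (\<forall>c\<in>X. (\<forall>i\<in>I. leX c (a i)) \<and> leB (f c) (f A) \<longrightarrow> leX c A)"

text \<open>The source (A <= a i) lifts the structured source (b <= f (a i)) iff f A = b.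
  f is topological iff every structured source, indexed by any index set of type 'i, has a
  unique initial lift.\<close>
definition topological :: "'i itself \<Rightarrow> 'x set \<Rightarrow> ('x \<Rightarrow> 'x \<Rightarrow> bool) \<Rightarrow> 'b set
    \<Rightarrow> ('b \<Rightarrow> 'b \<Rightarrow> bool) \<Rightarrow> ('x \<Rightarrow> 'b) \<Rightarrow> bool" where
  "topological ty X leX B leB f \<longleftrightarrow>
     (\<forall>(I :: 'i set) a b. b \<in> B \<and> (\<forall>i\<in>I. a i \<in> X \<and> leB b (f (a i))) \<longrightarrow>
        (\<exists>!A. A \<in> X \<and> (\<forall>i\<in>I. leX A (a i)) \<and> f A = b \<and> initial_source X leX leB f A I a))"

end

theory Submission
  imports Defs
begin

text \<open>
  Let b \<le> f (a i), i \<in> I, be a structured source. Adjoin to X a formal copy of S, an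
  element s of which stands for A s, where A is the lift still to be found: s lies below
  x \<in> X when some a i s does, and above x when x \<le> c s for some candidate c (that is,
  c \<le> a i for all i and f c \<le> b). Sending s to b s makes the quotient poset Z of this
  preorder an object over B that contains X, order-embedded, as a sub-object. Regular
  injectivity extends the identity of X to a morphism v : Z \<rightarrow> X over B, and A = v 1 lies
  below every a i, lies over b, and lies above every candidate; that is, it is an initial lift.
  Initial lifts are unique because X is a poset.
\<close>

lemma pomonoid_le_refl: "pomonoid S \<Longrightarrow> s \<in> pm_car S \<Longrightarrow> pm_le S s s"
  unfolding pomonoid_def poset_on_def by blast

lemma pomonoid_le_trans:
  "pomonoid S \<Longrightarrow> s \<in> pm_car S \<Longrightarrow> t \<in> pm_car S \<Longrightarrow> u \<in> pm_car S \<Longrightarrow>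
    pm_le S s t \<Longrightarrow> pm_le S t u \<Longrightarrow> pm_le S s u"
  unfolding pomonoid_def poset_on_def by blast

lemma pomonoid_one_closed: "pomonoid S \<Longrightarrow> pm_one S \<in> pm_car S"
  unfolding pomonoid_def by blast

lemma pomonoid_mult_closed:
  "pomonoid S \<Longrightarrow> s \<in> pm_car S \<Longrightarrow> t \<in> pm_car S \<Longrightarrow> pm_mult S s t \<in> pm_car S"
  unfolding pomonoid_def by blast

lemma pomonoid_mult_assoc:
  "pomonoid S \<Longrightarrow> s \<in> pm_car S \<Longrightarrow> t \<in> pm_car S \<Longrightarrow> u \<in> pm_car S \<Longrightarrow>
    pm_mult S (pm_mult S s t) u = pm_mult S s (pm_mult S t u)"
  unfolding pomonoid_def by blast

lemma pomonoid_mult_one: "pomonoid S \<Longrightarrow> s \<in> pm_car S \<Longrightarrow> pm_mult S s (pm_one S) = s"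
  unfolding pomonoid_def by blast

lemma pomonoid_mult_mono:
  "pomonoid S \<Longrightarrow> s \<in> pm_car S \<Longrightarrow> s' \<in> pm_car S \<Longrightarrow> t \<in> pm_car S \<Longrightarrow> t' \<in> pm_car S \<Longrightarrow>
    pm_le S s s' \<Longrightarrow> pm_le S t t' \<Longrightarrow> pm_le S (pm_mult S s t) (pm_mult S s' t')"
  unfolding pomonoid_def by blast

lemma is_Sposet_poset_on: "is_Sposet S A \<Longrightarrow> poset_on (sp_car A) (sp_le A)"
  unfolding is_Sposet_def by blast

lemma Sposet_le_refl: "is_Sposet S A \<Longrightarrow> x \<in> sp_car A \<Longrightarrow> sp_le A x x"
  unfolding is_Sposet_def poset_on_def by blast

lemma Sposet_le_trans:
  "is_Sposet S A \<Longrightarrow> x \<in> sp_car A \<Longrightarrow> y \<in> sp_car A \<Longrightarrow> z \<in> sp_car A \<Longrightarrow>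
    sp_le A x y \<Longrightarrow> sp_le A y z \<Longrightarrow> sp_le A x z"
  unfolding is_Sposet_def poset_on_def by blast

lemma Sposet_act_closed:
  "is_Sposet S A \<Longrightarrow> x \<in> sp_car A \<Longrightarrow> s \<in> pm_car S \<Longrightarrow> sp_act A x s \<in> sp_car A"
  unfolding is_Sposet_def by blast

lemma Sposet_act_one: "is_Sposet S A \<Longrightarrow> x \<in> sp_car A \<Longrightarrow> sp_act A x (pm_one S) = x"
  unfolding is_Sposet_def by blast

lemma Sposet_act_act:
  "is_Sposet S A \<Longrightarrow> x \<in> sp_car A \<Longrightarrow> s \<in> pm_car S \<Longrightarrow> t \<in> pm_car S \<Longrightarrow>
    sp_act A (sp_act A x s) t = sp_act A x (pm_mult S s t)"
  unfolding is_Sposet_def by blast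

lemma Sposet_act_mono:
  "is_Sposet S A \<Longrightarrow> x \<in> sp_car A \<Longrightarrow> y \<in> sp_car A \<Longrightarrow> s \<in> pm_car S \<Longrightarrow> t \<in> pm_car S \<Longrightarrow>
    sp_le A x y \<Longrightarrow> pm_le S s t \<Longrightarrow> sp_le A (sp_act A x s) (sp_act A y t)"
  unfolding is_Sposet_def by blast

lemma Spos_hom_closed: "Spos_hom S A A' h \<Longrightarrow> x \<in> sp_car A \<Longrightarrow> h x \<in> sp_car A'"
  unfolding Spos_hom_def by blast

lemma Spos_hom_mono:
  "Spos_hom S A A' h \<Longrightarrow> x \<in> sp_car A \<Longrightarrow> y \<in> sp_car A \<Longrightarrow>
    sp_le A x y \<Longrightarrow> sp_le A' (h x) (h y)"
  unfolding Spos_hom_def by blast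

lemma Spos_hom_act:
  "Spos_hom S A A' h \<Longrightarrow> x \<in> sp_car A \<Longrightarrow> s \<in> pm_car S \<Longrightarrow> h (sp_act A x s) = sp_act A' (h x) s"
  unfolding Spos_hom_def by blast

locale preordered_Sset =
  fixes S :: "'s pomon" and P :: "'p set" and R :: "'p \<Rightarrow> 'p \<Rightarrow> bool"
    and act :: "'p \<Rightarrow> 's \<Rightarrow> 'p"
  assumes pomonoid: "pomonoid S"
    and R_refl: "p \<in> P \<Longrightarrow> R p p"
    and R_trans: "p \<in> P \<Longrightarrow> q \<in> P \<Longrightarrow> r \<in> P \<Longrightarrow> R p q \<Longrightarrow> R q r \<Longrightarrow> R p r"
    and act_closed: "p \<in> P \<Longrightarrow> s \<in> pm_car S \<Longrightarrow> act p s \<in> P"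
    and act_one: "p \<in> P \<Longrightarrow> act p (pm_one S) = p"
    and act_act: "p \<in> P \<Longrightarrow> s \<in> pm_car S \<Longrightarrow> t \<in> pm_car S \<Longrightarrow>
      act (act p s) t = act p (pm_mult S s t)"
    and act_mono: "p \<in> P \<Longrightarrow> q \<in> P \<Longrightarrow> s \<in> pm_car S \<Longrightarrow> t \<in> pm_car S \<Longrightarrow>
      R p q \<Longrightarrow> pm_le S s t \<Longrightarrow> R (act p s) (act q t)"
begin

definition down_set :: "'p \<Rightarrow> 'p set" where
  "down_set p = {q \<in> P. R q p}"

definition quotient_Sposet :: "'p set \<Rightarrow> ('p set, 's) sposet" where
  "quotient_Sposet P' =
     \<lparr>sp_car = down_set ` P', sp_le = (\<subseteq>), sp_act = (\<lambda>U s. {q \<in> P. \<exists>p\<in>U. R q (act p s)})\<rparr>"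

definition lift :: "'p set \<Rightarrow> ('p \<Rightarrow> 'b) \<Rightarrow> 'p set \<Rightarrow> 'b" where
  "lift P' h U = h (SOME p. p \<in> P' \<and> U = down_set p)"

lemma down_set_subset_iff: "p \<in> P \<Longrightarrow> q \<in> P \<Longrightarrow> down_set p \<subseteq> down_set q \<longleftrightarrow> R p q"
  unfolding down_set_def using R_refl R_trans by blast

lemma quotient_Sposet_simps [simp]:
  "sp_car (quotient_Sposet P') = down_set ` P'"
  "sp_le (quotient_Sposet P') = (\<subseteq>)"
  by (simp_all add: quotient_Sposet_def)

lemma quotient_Sposet_act_down_set [simp]:
  assumes "p \<in> P" and "s \<in> pm_car S"
  shows "sp_act (quotient_Sposet P') (down_set p) s = down_set (act p s)"
proof -
  have "R q (act p s)" if "q \<in> P" "p' \<in> P" "R p' p" "R q (act p' s)" for q p'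
    using that assms R_trans act_closed act_mono pomonoid_le_refl[OF pomonoid] by meson
  then show ?thesis
    using assms R_refl unfolding quotient_Sposet_def down_set_def by auto
qed

lemma is_Sposet_quotient:
  assumes sub: "P' \<subseteq> P" and closed: "\<And>p s. p \<in> P' \<Longrightarrow> s \<in> pm_car S \<Longrightarrow> act p s \<in> P'"
  shows "is_Sposet S (quotient_Sposet P')"
proof -
  have in_P: "p \<in> P" if "p \<in> P'" for p
    using sub that by blast
  have mono: "down_set (act p s) \<subseteq> down_set (act q t)"
    if "p \<in> P'" "q \<in> P'" "s \<in> pm_car S" "t \<in> pm_car S"
      "down_set p \<subseteq> down_set q" "pm_le S s t" for p q s t
    using that in_P by (simp add: down_set_subset_iff act_closed act_mono)
  show ?thesis
    unfolding is_Sposet_def poset_on_def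
    using closed in_P mono pomonoid_mult_closed[OF pomonoid] pomonoid_one_closed[OF pomonoid]
    by (auto simp: act_one act_act)
qed

lemma lift_down_set:
  assumes B: "poset_on B leB" and sub: "P' \<subseteq> P"
    and closed: "\<And>p. p \<in> P' \<Longrightarrow> h p \<in> B"
    and mono: "\<And>p q. p \<in> P' \<Longrightarrow> q \<in> P' \<Longrightarrow> R p q \<Longrightarrow> leB (h p) (h q)"
    and p: "p \<in> P'"
  shows "lift P' h (down_set p) = h p"
proof -
  define q where "q = (SOME q. q \<in> P' \<and> down_set p = down_set q)"
  have q: "q \<in> P'" "down_set p = down_set q"
    unfolding q_def using someI[where P = "\<lambda>q. q \<in> P' \<and> down_set p = down_set q"] p by blast+
  then have "R p q" "R q p"
    using p sub down_set_subset_iff[of p q] down_set_subset_iff[of q p] by auto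
  then have "h q = h p"
    using p q(1) closed mono B unfolding poset_on_def by metis
  then show ?thesis
    unfolding lift_def q_def .
qed

lemma Spos_hom_lift:
  assumes B: "is_Sposet S B" and sub: "P' \<subseteq> P"
    and P'_closed: "\<And>p s. p \<in> P' \<Longrightarrow> s \<in> pm_car S \<Longrightarrow> act p s \<in> P'"
    and closed: "\<And>p. p \<in> P' \<Longrightarrow> h p \<in> sp_car B"
    and mono: "\<And>p q. p \<in> P' \<Longrightarrow> q \<in> P' \<Longrightarrow> R p q \<Longrightarrow> sp_le B (h p) (h q)"
    and equivariant: "\<And>p s. p \<in> P' \<Longrightarrow> s \<in> pm_car S \<Longrightarrow> h (act p s) = sp_act B (h p) s"
  shows "Spos_hom S (quotient_Sposet P') B (lift P' h)"
proof -
  note lift = lift_down_set[OF is_Sposet_poset_on[OF B] sub closed mono]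
  have "p \<in> P" if "p \<in> P'" for p
    using sub that by blast
  then show ?thesis
    unfolding Spos_hom_def
    using closed mono equivariant P'_closed
    by (auto simp: lift down_set_subset_iff)
qed

end

locale structured_source =
  fixes S :: "'s pomon" and B :: "('b, 's) sposet" and X :: "('x, 's) sposet"
    and f :: "'x \<Rightarrow> 'b" and b :: 'b and I :: "'i set" and a :: "'i \<Rightarrow> 'x"
  assumes pomonoid: "pomonoid S" and B_Sposet: "is_Sposet S B" and X_Sposet: "is_Sposet S X"
    and f_hom: "Spos_hom S X B f"
    and b_in: "b \<in> sp_car B"
    and a_in: "i \<in> I \<Longrightarrow> a i \<in> sp_car X"
    and b_le: "i \<in> I \<Longrightarrow> sp_le B b (f (a i))"
begin

lemmas S_refl = pomonoid_le_refl[OF pomonoid]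
  and S_trans = pomonoid_le_trans[OF pomonoid]
  and S_one = pomonoid_one_closed[OF pomonoid]
  and S_mult = pomonoid_mult_closed[OF pomonoid]
  and S_assoc = pomonoid_mult_assoc[OF pomonoid]
  and S_mult_one = pomonoid_mult_one[OF pomonoid]
  and S_mult_mono = pomonoid_mult_mono[OF pomonoid]
  and X_poset = is_Sposet_poset_on[OF X_Sposet]
  and X_refl = Sposet_le_refl[OF X_Sposet]
  and X_trans = Sposet_le_trans[OF X_Sposet]
  and X_act = Sposet_act_closed[OF X_Sposet]
  and X_act_one = Sposet_act_one[OF X_Sposet]
  and X_act_act = Sposet_act_act[OF X_Sposet]
  and X_act_mono = Sposet_act_mono[OF X_Sposet]
  and B_poset = is_Sposet_poset_on[OF B_Sposet]
  and B_refl = Sposet_le_refl[OF B_Sposet]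
  and B_trans = Sposet_le_trans[OF B_Sposet]
  and B_act = Sposet_act_closed[OF B_Sposet]
  and B_act_one = Sposet_act_one[OF B_Sposet]
  and B_act_act = Sposet_act_act[OF B_Sposet]
  and B_act_mono = Sposet_act_mono[OF B_Sposet]
  and f_closed = Spos_hom_closed[OF f_hom]
  and f_mono = Spos_hom_mono[OF f_hom]
  and f_act = Spos_hom_act[OF f_hom]

definition candidates :: "'x set" where
  "candidates = {c \<in> sp_car X. (\<forall>i\<in>I. sp_le X c (a i)) \<and> sp_le B (f c) b}"

definition ext_car :: "('x + 's) set" where
  "ext_car = Inl ` sp_car X \<union> Inr ` pm_car S"

definition ext_act :: "'x + 's \<Rightarrow> 's \<Rightarrow> 'x + 's" where
  "ext_act p s = map_sum (\<lambda>x. sp_act X x s) (\<lambda>t. pm_mult S t s) p"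

definition le_point :: "'x + 's \<Rightarrow> 'x \<Rightarrow> bool" where
  "le_point p x = (case p of
      Inl y \<Rightarrow> sp_le X y x
    | Inr s \<Rightarrow> (\<exists>i\<in>I. sp_le X (sp_act X (a i) s) x))"

definition point_le :: "'x \<Rightarrow> 'x + 's \<Rightarrow> bool" where
  "point_le x q = (case q of
      Inl y \<Rightarrow> sp_le X x y
    | Inr t \<Rightarrow> (\<exists>c\<in>candidates. sp_le X x (sp_act X c t)))"

definition ext_le :: "'x + 's \<Rightarrow> 'x + 's \<Rightarrow> bool" where
  "ext_le p q \<longleftrightarrow>
     (\<exists>s t. p = Inr s \<and> q = Inr t \<and> pm_le S s t) \<or> (\<exists>x\<in>sp_car X. le_point p x \<and> point_le x q)"

definition ext_map :: "'x + 's \<Rightarrow> 'b" where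
  "ext_map = case_sum f (sp_act B b)"

lemma candidate_in: "c \<in> candidates \<Longrightarrow> c \<in> sp_car X"
  unfolding candidates_def by blast

lemma ext_car_simps [simp]:
  "Inl x \<in> ext_car \<longleftrightarrow> x \<in> sp_car X"
  "Inr s \<in> ext_car \<longleftrightarrow> s \<in> pm_car S"
  unfolding ext_car_def by auto

lemma ext_car_cases [consumes 1, case_names Inl Inr]:
  assumes "p \<in> ext_car"
  obtains x where "x \<in> sp_car X" "p = Inl x" | s where "s \<in> pm_car S" "p = Inr s"
  using assms unfolding ext_car_def by blast

lemma ext_act_simps [simp]:
  "ext_act (Inl x) s = Inl (sp_act X x s)"
  "ext_act (Inr t) s = Inr (pm_mult S t s)"
  by (simp_all add: ext_act_def)

lemma le_point_simps [simp]:
  "le_point (Inl y) x \<longleftrightarrow> sp_le X y x"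
  "le_point (Inr s) x \<longleftrightarrow> (\<exists>i\<in>I. sp_le X (sp_act X (a i) s) x)"
  by (simp_all add: le_point_def)

lemma point_le_simps [simp]:
  "point_le x (Inl y) \<longleftrightarrow> sp_le X x y"
  "point_le x (Inr t) \<longleftrightarrow> (\<exists>c\<in>candidates. sp_le X x (sp_act X c t))"
  by (simp_all add: point_le_def)

lemma ext_map_simps [simp]:
  "ext_map (Inl x) = f x"
  "ext_map (Inr s) = sp_act B b s"
  by (simp_all add: ext_map_def)

lemma le_point_trans:
  assumes p: "p \<in> ext_car" and x: "x \<in> sp_car X" and y: "y \<in> sp_car X"
    and px: "le_point p x" and xy: "sp_le X x y"
  shows "le_point p y"
  using p
proof (cases rule: ext_car_cases)
  case (Inl z)
  then show ?thesis
    using px x y xy X_trans[of z x y] by simp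
next
  case (Inr s)
  then obtain i where i: "i \<in> I" "sp_le X (sp_act X (a i) s) x"
    using px by auto
  then have "sp_le X (sp_act X (a i) s) y"
    using Inr x y xy a_in X_act X_trans[of "sp_act X (a i) s" x y] by blast
  with i Inr show ?thesis
    by auto
qed

lemma point_le_le_point:
  assumes q: "q \<in> ext_car" and x: "x \<in> sp_car X" and y: "y \<in> sp_car X"
    and xq: "point_le x q" and qy: "le_point q y"
  shows "sp_le X x y"
  using q
proof (cases rule: ext_car_cases)
  case (Inl z)
  then show ?thesis
    using xq qy x y X_trans[of x z y] by simp
next
  case (Inr t)
  then obtain c i where c: "c \<in> candidates" "sp_le X x (sp_act X c t)"
    and i: "i \<in> I" "sp_le X (sp_act X (a i) t) y"
    using xq qy by auto
  have "sp_le X (sp_act X c t) (sp_act X (a i) t)"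
    using c i Inr X_act_mono[of c "a i" t t] a_in candidate_in S_refl
    unfolding candidates_def by blast
  then have "sp_le X (sp_act X c t) y"
    using i Inr y X_trans[of "sp_act X c t" "sp_act X (a i) t" y] X_act a_in c candidate_in by blast
  then show ?thesis
    using c Inr x y X_trans[of x "sp_act X c t" y] X_act candidate_in by blast
qed

lemma le_point_Inr_antimono:
  assumes s: "s \<in> pm_car S" and t: "t \<in> pm_car S" and x: "x \<in> sp_car X"
    and st: "pm_le S s t" and tx: "le_point (Inr t) x"
  shows "le_point (Inr s) x"
proof -
  obtain i where i: "i \<in> I" "sp_le X (sp_act X (a i) t) x"
    using tx by auto
  have "sp_le X (sp_act X (a i) s) (sp_act X (a i) t)"
    using s t st i a_in X_act_mono[of "a i" "a i" s t] X_refl by blast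
  then have "sp_le X (sp_act X (a i) s) x"
    using s t x i a_in X_act X_trans[of "sp_act X (a i) s" "sp_act X (a i) t" x] by blast
  with i show ?thesis
    by auto
qed

lemma point_le_Inr_mono:
  assumes s: "s \<in> pm_car S" and t: "t \<in> pm_car S" and x: "x \<in> sp_car X"
    and st: "pm_le S s t" and xs: "point_le x (Inr s)"
  shows "point_le x (Inr t)"
proof -
  obtain c where c: "c \<in> candidates" "sp_le X x (sp_act X c s)"
    using xs by auto
  have "sp_le X (sp_act X c s) (sp_act X c t)"
    using s t st c candidate_in X_act_mono[of c c s t] X_refl by blast
  then have "sp_le X x (sp_act X c t)"
    using s t x c candidate_in X_act X_trans[of x "sp_act X c s" "sp_act X c t"] by blast
  with c show ?thesis
    by auto
qed

lemma ext_le_InrI: "pm_le S s t \<Longrightarrow> ext_le (Inr s) (Inr t)"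
  unfolding ext_le_def by blast

lemma ext_le_pointI: "x \<in> sp_car X \<Longrightarrow> le_point p x \<Longrightarrow> point_le x q \<Longrightarrow> ext_le p q"
  unfolding ext_le_def by blast

lemma ext_le_cases [consumes 1, case_names Inr point]:
  assumes "ext_le p q"
  obtains s t where "p = Inr s" "q = Inr t" "pm_le S s t"
    | x where "x \<in> sp_car X" "le_point p x" "point_le x q"
  using assms unfolding ext_le_def by blast

lemma ext_le_refl:
  assumes "p \<in> ext_car"
  shows "ext_le p p"
  using assms
proof (cases rule: ext_car_cases)
  case (Inl x)
  then show ?thesis
    using X_refl by (intro ext_le_pointI[of x]) simp_all
next
  case (Inr s)
  then show ?thesis
    using S_refl by (simp add: ext_le_InrI)
qed

lemma ext_le_trans:
  assumes p: "p \<in> ext_car" and q: "q \<in> ext_car" and r: "r \<in> ext_car"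
    and pq: "ext_le p q" and qr: "ext_le q r"
  shows "ext_le p r"
  using pq
proof (cases rule: ext_le_cases)
  case pq_Inr: (Inr s t)
  from qr show ?thesis
  proof (cases rule: ext_le_cases)
    case (Inr t' u)
    with pq_Inr have "pm_le S s u"
      using p q r S_trans[of s t u] by simp
    then show ?thesis
      using pq_Inr Inr ext_le_InrI by simp
  next
    case (point y)
    then have "le_point p y"
      using pq_Inr p q le_point_Inr_antimono[of s t y] by simp
    then show ?thesis
      using point ext_le_pointI by blast
  qed
next
  case pq_point: (point x)
  from qr show ?thesis
  proof (cases rule: ext_le_cases)
    case (Inr t u)
    then have "point_le x r"
      using pq_point q r point_le_Inr_mono[of t u x] by simp
    then show ?thesis
      using pq_point ext_le_pointI by blast
  next
    case (point y)
    then have "sp_le X x y"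
      using pq_point q point_le_le_point by blast
    then have "le_point p y"
      using pq_point point p le_point_trans by blast
    then show ?thesis
      using point ext_le_pointI by blast
  qed
qed

lemma ext_act_closed:
  assumes "p \<in> ext_car" and "s \<in> pm_car S"
  shows "ext_act p s \<in> ext_car"
  using assms by (cases rule: ext_car_cases) (simp_all add: X_act S_mult)

lemma ext_act_one:
  assumes "p \<in> ext_car"
  shows "ext_act p (pm_one S) = p"
  using assms by (cases rule: ext_car_cases) (simp_all add: X_act_one S_mult_one)

lemma ext_act_act:
  assumes "p \<in> ext_car" and "s \<in> pm_car S" and "t \<in> pm_car S"
  shows "ext_act (ext_act p s) t = ext_act p (pm_mult S s t)"
  using assms by (cases rule: ext_car_cases) (simp_all add: X_act_act S_assoc)

lemma le_point_act:
  assumes p: "p \<in> ext_car" and x: "x \<in> sp_car X" and s: "s \<in> pm_car S"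
    and px: "le_point p x"
  shows "le_point (ext_act p s) (sp_act X x s)"
  using p
proof (cases rule: ext_car_cases)
  case (Inl y)
  then show ?thesis
    using px x s S_refl X_act_mono[of y x s s] by simp
next
  case (Inr t)
  then obtain i where i: "i \<in> I" "sp_le X (sp_act X (a i) t) x"
    using px by auto
  then have "sp_le X (sp_act X (a i) (pm_mult S t s)) (sp_act X x s)"
    using Inr x s a_in S_refl X_act X_act_act X_act_mono[of "sp_act X (a i) t" x s s] by simp
  with i Inr show ?thesis
    by auto
qed

lemma point_le_act:
  assumes q: "q \<in> ext_car" and x: "x \<in> sp_car X" and s: "s \<in> pm_car S"
    and xq: "point_le x q"
  shows "point_le (sp_act X x s) (ext_act q s)"
  using q
proof (cases rule: ext_car_cases)
  case (Inl y)
  then show ?thesis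
    using xq x s S_refl X_act_mono[of x y s s] by simp
next
  case (Inr t)
  then obtain c where c: "c \<in> candidates" "sp_le X x (sp_act X c t)"
    using xq by auto
  then have "sp_le X (sp_act X x s) (sp_act X c (pm_mult S t s))"
    using Inr x s candidate_in S_refl X_act X_act_act X_act_mono[of x "sp_act X c t" s s] by simp
  with c Inr show ?thesis
    by auto
qed

lemma ext_act_mono:
  assumes p: "p \<in> ext_car" and q: "q \<in> ext_car" and s: "s \<in> pm_car S" and t: "t \<in> pm_car S"
    and pq: "ext_le p q" and st: "pm_le S s t"
  shows "ext_le (ext_act p s) (ext_act q t)"
  using pq
proof (cases rule: ext_le_cases)
  case (Inr u v)
  then have "pm_le S (pm_mult S u s) (pm_mult S v t)"
    using Inr p q s t st S_mult_mono[of u v s t] by simp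
  then show ?thesis
    using Inr ext_le_InrI by simp
next
  case (point x)
  have "sp_le X (sp_act X x s) (sp_act X x t)"
    using point s t st X_act_mono[of x x s t] X_refl by blast
  moreover have "le_point (ext_act p s) (sp_act X x s)"
    using point p s le_point_act by blast
  ultimately have "le_point (ext_act p s) (sp_act X x t)"
    using point p s t X_act ext_act_closed le_point_trans by blast
  moreover have "point_le (sp_act X x t) (ext_act q t)"
    using point q t point_le_act by blast
  ultimately show ?thesis
    using point t X_act ext_le_pointI by blast
qed

lemma preordered_Sset_ext: "preordered_Sset S ext_car ext_le ext_act"
  by unfold_locales
    (fact pomonoid ext_le_refl ext_le_trans ext_act_closed ext_act_one ext_act_act ext_act_mono)+

lemma ext_map_closed:
  assumes "p \<in> ext_car"
  shows "ext_map p \<in> sp_car B"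
  using assms by (cases rule: ext_car_cases) (simp_all add: f_closed B_act b_in)

lemma ext_map_act:
  assumes "p \<in> ext_car" and "s \<in> pm_car S"
  shows "ext_map (ext_act p s) = sp_act B (ext_map p) s"
  using assms by (cases rule: ext_car_cases) (simp_all add: f_act B_act_act b_in)

lemma ext_map_le_point:
  assumes p: "p \<in> ext_car" and x: "x \<in> sp_car X" and px: "le_point p x"
  shows "sp_le B (ext_map p) (f x)"
  using p
proof (cases rule: ext_car_cases)
  case (Inl y)
  then show ?thesis
    using px x f_mono by simp
next
  case (Inr s)
  then obtain i where i: "i \<in> I" "sp_le X (sp_act X (a i) s) x"
    using px by auto
  have "sp_le B (sp_act B b s) (sp_act B (f (a i)) s)"
    using Inr i b_in b_le a_in f_closed S_refl B_act_mono[of b "f (a i)" s s] by blast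
  moreover have "sp_le B (f (sp_act X (a i) s)) (f x)"
    using Inr i x a_in X_act f_mono[of "sp_act X (a i) s" x] by blast
  ultimately show ?thesis
    using Inr i x a_in b_in f_act f_closed B_act X_act
      B_trans[of "sp_act B b s" "sp_act B (f (a i)) s" "f x"] by simp
qed

lemma point_le_ext_map:
  assumes q: "q \<in> ext_car" and x: "x \<in> sp_car X" and xq: "point_le x q"
  shows "sp_le B (f x) (ext_map q)"
  using q
proof (cases rule: ext_car_cases)
  case (Inl y)
  then show ?thesis
    using xq x f_mono by simp
next
  case (Inr t)
  then obtain c where c: "c \<in> candidates" "sp_le X x (sp_act X c t)"
    using xq by auto
  have "sp_le B (sp_act B (f c) t) (sp_act B b t)"
    using Inr c b_in candidate_in f_closed S_refl B_act_mono[of "f c" b t t]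
    unfolding candidates_def by blast
  moreover have "sp_le B (f x) (f (sp_act X c t))"
    using Inr c x candidate_in X_act f_mono[of x "sp_act X c t"] by blast
  ultimately show ?thesis
    using Inr c x candidate_in b_in f_act f_closed B_act
      B_trans[of "f x" "sp_act B (f c) t" "sp_act B b t"] by simp
qed

lemma ext_map_mono:
  assumes p: "p \<in> ext_car" and q: "q \<in> ext_car" and pq: "ext_le p q"
  shows "sp_le B (ext_map p) (ext_map q)"
  using pq
proof (cases rule: ext_le_cases)
  case (Inr s t)
  then show ?thesis
    using p q b_in B_refl B_act_mono by simp
next
  case (point x)
  then show ?thesis
    using p q f_closed ext_map_closed ext_map_le_point point_le_ext_map
      B_trans[of "ext_map p" "f x" "ext_map q"] by blast
qed

lemma ext_le_Inl_iff:
  assumes x: "x \<in> sp_car X" and y: "y \<in> sp_car X"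
  shows "ext_le (Inl x) (Inl y) \<longleftrightarrow> sp_le X x y"
proof
  assume "ext_le (Inl x) (Inl y)"
  then obtain z where "z \<in> sp_car X" "sp_le X x z" "sp_le X z y"
    by (cases rule: ext_le_cases) auto
  then show "sp_le X x y"
    using x y X_trans by blast
next
  assume "sp_le X x y"
  then show "ext_le (Inl x) (Inl y)"
    using x X_refl ext_le_pointI[of x] by simp
qed

end

sublocale structured_source \<subseteq> ext: preordered_Sset S ext_car ext_le ext_act
  by (rule preordered_Sset_ext)

context structured_source
begin

lemma Inl_subset_ext_car: "Inl ` sp_car X \<subseteq> ext_car"
  by auto

lemma ext_act_Inl_closed: "p \<in> Inl ` sp_car X \<Longrightarrow> s \<in> pm_car S \<Longrightarrow> ext_act p s \<in> Inl ` sp_car X"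
  using X_act by auto

lemma lift_ext_map_down_set:
  assumes "P' \<subseteq> ext_car" and "p \<in> P'"
  shows "ext.lift P' ext_map (ext.down_set p) = ext_map p"
  using assms ext.lift_down_set[OF B_poset, of P' ext_map] ext_map_closed ext_map_mono
  by (metis subsetD)

lemma slice_obj_ext_quotient:
  assumes sub: "P' \<subseteq> ext_car"
    and closed: "\<And>p s. p \<in> P' \<Longrightarrow> s \<in> pm_car S \<Longrightarrow> ext_act p s \<in> P'"
  shows "slice_obj S B (ext.quotient_Sposet P') (ext.lift P' ext_map)"
proof -
  have "Spos_hom S (ext.quotient_Sposet P') B (ext.lift P' ext_map)"
    using sub ext_map_closed ext_map_mono ext_map_act
    by (intro ext.Spos_hom_lift[OF B_Sposet sub closed]) blast+
  then show ?thesis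
    unfolding slice_obj_def using pomonoid B_Sposet ext.is_Sposet_quotient[OF sub closed] by blast
qed

lemma projl_closed_on_Inl: "p \<in> Inl ` sp_car X \<Longrightarrow> projl p \<in> sp_car X"
  by auto

lemma projl_mono_on_Inl:
  "p \<in> Inl ` sp_car X \<Longrightarrow> q \<in> Inl ` sp_car X \<Longrightarrow> ext_le p q \<Longrightarrow> sp_le X (projl p) (projl q)"
  using ext_le_Inl_iff by auto

lemma lift_projl_down_set:
  "x \<in> sp_car X \<Longrightarrow> ext.lift (Inl ` sp_car X) projl (ext.down_set (Inl x)) = x"
  using ext.lift_down_set[where h = projl, OF X_poset Inl_subset_ext_car projl_closed_on_Inl
      projl_mono_on_Inl] by simp

lemma Spos_hom_lift_projl:
  "Spos_hom S (ext.quotient_Sposet (Inl ` sp_car X)) X (ext.lift (Inl ` sp_car X) projl)"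
  by (rule ext.Spos_hom_lift[where h = projl, OF X_Sposet Inl_subset_ext_car ext_act_Inl_closed
        projl_closed_on_Inl projl_mono_on_Inl]) auto

lemma extension_along_Inl:
  assumes "regular_injective TYPE(('x + 's) set) S B X f"
  obtains v where "Spos_hom S (ext.quotient_Sposet ext_car) X v"
    and "\<And>x. x \<in> sp_car X \<Longrightarrow> v (ext.down_set (Inl x)) = x"
    and "\<And>p. p \<in> ext_car \<Longrightarrow> f (v (ext.down_set p)) = ext_map p"
proof -
  let ?X' = "Inl ` sp_car X"
  let ?Y = "ext.quotient_Sposet ?X'" and ?Z = "ext.quotient_Sposet ext_car"
  let ?kY = "ext.lift ?X' ext_map" and ?kZ = "ext.lift ext_car ext_map"
  let ?u = "ext.lift ?X' projl"
  note kY_down = lift_ext_map_down_set[OF Inl_subset_ext_car]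
  note kZ_down = lift_ext_map_down_set[OF order_refl]
  have "slice_obj S B ?Y ?kY" "slice_obj S B ?Z ?kZ"
    by (rule slice_obj_ext_quotient; simp add: ext_act_Inl_closed ext_act_closed Inl_subset_ext_car)+
  moreover have "slice_hom S B ?Y ?kY ?Z ?kZ id"
    unfolding slice_hom_def Spos_hom_def using kY_down kZ_down
    by (auto simp: ext.quotient_Sposet_def)
  moreover have "order_embedding ?Y ?Z id"
    unfolding order_embedding_def by simp
  moreover have "slice_hom S B ?Y ?kY X f ?u"
    unfolding slice_hom_def using Spos_hom_lift_projl lift_projl_down_set kY_down by auto
  ultimately obtain v where v: "slice_hom S B ?Z ?kZ X f v" "\<forall>U\<in>sp_car ?Y. v U = ?u U"
    using assms unfolding regular_injective_def by (metis id_apply)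
  show thesis
  proof
    show "Spos_hom S ?Z X v"
      using v unfolding slice_hom_def by blast
    show "v (ext.down_set (Inl x)) = x" if "x \<in> sp_car X" for x
      using v(2) lift_projl_down_set that by simp
    show "f (v (ext.down_set p)) = ext_map p" if "p \<in> ext_car" for p
      using v(1) kZ_down that unfolding slice_hom_def by simp
  qed
qed

lemma initial_lift_exists:
  assumes "regular_injective TYPE(('x + 's) set) S B X f"
  obtains A where "A \<in> sp_car X" "\<forall>i\<in>I. sp_le X A (a i)" "f A = b"
    and "initial_source (sp_car X) (sp_le X) (sp_le B) f A I a"
proof -
  obtain v where v_hom: "Spos_hom S (ext.quotient_Sposet ext_car) X v"
    and v_Inl: "\<And>x. x \<in> sp_car X \<Longrightarrow> v (ext.down_set (Inl x)) = x"
    and v_f: "\<And>p. p \<in> ext_car \<Longrightarrow> f (v (ext.down_set p)) = ext_map p"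
    using extension_along_Inl[OF assms] by blast
  have v_mono: "sp_le X (v (ext.down_set p)) (v (ext.down_set q))"
    if "p \<in> ext_car" "q \<in> ext_car" "ext_le p q" for p q
    using Spos_hom_mono[OF v_hom] ext.down_set_subset_iff that by simp
  define A where "A = v (ext.down_set (Inr (pm_one S)))"
  have one: "Inr (pm_one S) \<in> ext_car"
    using S_one by simp
  have "A \<in> sp_car X"
    unfolding A_def using Spos_hom_closed[OF v_hom] one by simp
  moreover have "f A = b"
    unfolding A_def using v_f one b_in B_act_one by simp
  moreover have "sp_le X A (a i)" if i: "i \<in> I" for i
  proof -
    have "le_point (Inr (pm_one S)) (a i)"
      using i a_in X_act_one X_refl by (auto intro!: bexI[of _ i])
    then have "ext_le (Inr (pm_one S)) (Inl (a i))"
      using i a_in X_refl by (intro ext_le_pointI[of "a i"]) auto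
    then show ?thesis
      unfolding A_def using v_mono[of _ "Inl (a i)"] v_Inl[of "a i"] one i a_in by simp
  qed
  moreover have "sp_le X c A" if c: "c \<in> candidates" for c
  proof -
    have "point_le c (Inr (pm_one S))"
      using c candidate_in X_act_one X_refl by (auto intro!: bexI[of _ c])
    then have "ext_le (Inl c) (Inr (pm_one S))"
      using c candidate_in X_refl by (intro ext_le_pointI[of c]) auto
    then show ?thesis
      unfolding A_def using v_mono[of "Inl c"] v_Inl[of c] one c candidate_in by simp
  qed
  ultimately show thesis
    using that a_in unfolding initial_source_def candidates_def by auto
qed

end

lemma initial_lift_unique:
  assumes "poset_on X leX" and "leB b b"
    and "initial_source X leX leB f A I a" "\<forall>i\<in>I. leX A (a i)" "f A = b"
    and "initial_source X leX leB f A' I a" "\<forall>i\<in>I. leX A' (a i)" "f A' = b"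
  shows "A = A'"
  using assms unfolding initial_source_def poset_on_def by metis

theorem mainTheorem7:
  fixes S :: "'s pomon" and B :: "('b, 's) sposet"
    and X :: "('x, 's) sposet" and f :: "'x \<Rightarrow> 'b"
  assumes "pomonoid S"
    and "is_Sposet S B"
    and "regular_injective TYPE(('x + 's) set) S B X f"
  shows "topological TYPE('i) (sp_car X) (sp_le X) (sp_car B) (sp_le B) f"
  unfolding topological_def
proof (intro allI impI)
  fix I :: "'i set" and a b
  assume source: "b \<in> sp_car B \<and> (\<forall>i\<in>I. a i \<in> sp_car X \<and> sp_le B b (f (a i)))"
  have "slice_obj S B X f"
    using assms(3) unfolding regular_injective_def by blast
  then interpret structured_source S B X f b I a
    using source by unfold_locales (auto simp: slice_obj_def)
  obtain A where A: "A \<in> sp_car X" "\<forall>i\<in>I. sp_le X A (a i)" "f A = b"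
    "initial_source (sp_car X) (sp_le X) (sp_le B) f A I a"
    by (rule initial_lift_exists[OF assms(3)])
  have "A' = A" if "initial_source (sp_car X) (sp_le X) (sp_le B) f A' I a"
    "\<forall>i\<in>I. sp_le X A' (a i)" "f A' = b" for A'
    using initial_lift_unique[OF X_poset B_refl[OF b_in] that A(4,2,3)] .
  with A show "\<exists>!A. A \<in> sp_car X \<and> (\<forall>i\<in>I. sp_le X A (a i)) \<and> f A = b \<and>
      initial_source (sp_car X) (sp_le X) (sp_le B) f A I a"
    by blast
qed

end
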